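(* Let $n\in\mathbb N$ with $n\ge 8$ and $i\in\{1,2\}$. Then $r(T_n^i,T_n')=r(T_n^i,T_n^* )=2n-5$.
   Context: All graphs are finite and simple; a graph "contains" $H$ if it has a subgraph isomorphic to $H$. For graphs $G_1,G_2$, the Ramsey number $r(G_1,G_2)$ is the smallest positive integer $N$ such that for every graph $G$ on $N$ vertices, either $G$ contains a copy of $G_1$ or the complement $\overline G$ contains a copy of $G_2$. For $n\ge 5$, $T_n^1$ is the tree with vertex set $\{v_0,\ldots,v_{n-1}\}$ and edges $v_0v_1,\ldots,v_0v_{n-3},v_{n-4}v_{n-2},v_{n-3}v_{n-1}$, and $T_n^2$ is the tree on the same vertex set with edges $v_0v_1,\ldots,v_0v_{n-3},v_{n-3}v_{n-2},v_{n-3}v_{n-1}$. For $n\ge 4$, $T_n'$ is the unique (up to isomorphism) tree on $n$ vertices with maximum degree $n-2$, and $T_n^*$ is the tree on $\{v_0,\ldots,v_{n-1}\}$ with edges $v_0v_1,\ldots,v_0v_{n-3},v_{n-3}v_{n-2},v_{n-2}v_{n-1}$. *)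

theory Defs
  imports Main
begin

type_synonym 'a graph = "'a set \<times> 'a set set"

definition simple_graph :: "'a graph \<Rightarrow> bool" where
  "simple_graph G \<longleftrightarrow> finite (fst G) \<and>
     (\<forall>e\<in>snd G. \<exists>x y. x \<in> fst G \<and> y \<in> fst G \<and> x \<noteq> y \<and> e = {x, y})"

definition contains :: "'a graph \<Rightarrow> 'b graph \<Rightarrow> bool" where
  "contains G H \<longleftrightarrow> (\<exists>f. inj_on f (fst H) \<and> f ` fst H \<subseteq> fst G \<and>
      (\<forall>e\<in>snd H. f ` e \<in> snd G))"

definition complement :: "'a graph \<Rightarrow> 'a graph" where
  "complement G = (fst G, {{x, y} | x y. x \<in> fst G \<and> y \<in> fst G \<and> x \<noteq> y} - snd G)"

text \<open>Graphs on N vertices are taken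
  (without loss of generality, up to isomorphism) with vertex set {0..<N}.\<close>
definition ramsey :: "'a graph \<Rightarrow> 'b graph \<Rightarrow> nat" where
  "ramsey G1 G2 = (LEAST N. 0 < N \<and>
     (\<forall>E. simple_graph ({0..<N}, E) \<longrightarrow>
        contains ({0..<N::nat}, E) G1 \<or> contains (complement ({0..<N}, E)) G2))"

text \<open>The trees, on vertex set {0..<n} (vertex v_k is k).\<close>

definition T1 :: "nat \<Rightarrow> nat graph" where
  "T1 n = ({0..<n}, {{0, k} | k. 1 \<le> k \<and> k \<le> n - 3} \<union> {{n - 4, n - 2}, {n - 3, n - 1}})"

definition T2 :: "nat \<Rightarrow> nat graph" where
  "T2 n = ({0..<n}, {{0, k} | k. 1 \<le> k \<and> k \<le> n - 3} \<union> {{n - 3, n - 2}, {n - 3, n - 1}})"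

definition Tstar :: "nat \<Rightarrow> nat graph" where
  "Tstar n = ({0..<n}, {{0, k} | k. 1 \<le> k \<and> k \<le> n - 3} \<union> {{n - 3, n - 2}, {n - 2, n - 1}})"

definition Tprime :: "nat \<Rightarrow> nat graph" where
  "Tprime n = ({0..<n}, {{0, k} | k. 1 \<le> k \<and> k \<le> n - 2} \<union> {{n - 2, n - 1}})"

definition Ti :: "nat \<Rightarrow> nat \<Rightarrow> nat graph" where
  "Ti i n = (if i = 1 then T1 n else T2 n)"

end

theory Submission
  imports Defs
begin

text \<open>
  Write m = n - 3, so that the trees have m + 3 vertices and 2n - 5 = 2m + 1.  The hub 0 of
  T1 and T2 has m neighbours, the hub of T' has m + 1, and T* is a hub with m leaves and a
  pendant path of length 2.

  Lower bound: two disjoint cliques on at most m vertices each contain no vertex of degree m,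
  hence neither T1 nor T2, and their complement is bipartite with sides of size at most m,
  which cannot host T' or T* (each has m + 1 vertices in one colour class).

  Upper bound: in a graph G on 2m + 1 vertices whose complement avoids T' (resp. T*), take a
  vertex v of minimum degree.  If the minimum degree is at least m, a degree argument inside G
  yields both T1 and T2; otherwise v has at least m + 1 non-neighbours, and avoiding T' or T*
  centred at v in the complement forces a vertex of degree at least m + 2 with two neighbours
  of degree at least 4, which is the hub of both T1 and T2.
\<close>

lemma exists_not_in:
  assumes "finite X" "card X < card A"
  shows "\<exists>x\<in>A. x \<notin> X"
proof (rule ccontr)
  assume "\<not> ?thesis"
  then have "card A \<le> card X" using assms(1) by (intro card_mono) auto
  with assms(2) show False by linarith
qed

lemma exists_not_in_list: "length xs < card A \<Longrightarrow> \<exists>x\<in>A. x \<notin> set xs"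
  using exists_not_in[of "set xs" A] card_length[of xs] by simp

lemma card_Diff_list: "card A - length xs \<le> card (A - set xs)"
  using diff_card_le_card_Diff[OF finite_set[of xs], of A] card_length[of xs] by linarith

definition nbhd :: "'a graph \<Rightarrow> 'a \<Rightarrow> 'a set" where
  "nbhd G x = {y \<in> fst G. {x, y} \<in> snd G}"

lemma simple_graph_edge:
  assumes "simple_graph G" "{x, y} \<in> snd G"
  shows "x \<in> fst G \<and> y \<in> fst G \<and> x \<noteq> y"
  using assms unfolding simple_graph_def by (fastforce simp: doubleton_eq_iff)

lemma nbhd_iff: "simple_graph G \<Longrightarrow> y \<in> nbhd G x \<longleftrightarrow> {x, y} \<in> snd G"
  unfolding nbhd_def using simple_graph_edge[of G x y] by auto

lemma nbhd_vertices: "simple_graph G \<Longrightarrow> y \<in> nbhd G x \<Longrightarrow> x \<in> fst G \<and> y \<in> fst G \<and> x \<noteq> y"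
  unfolding nbhd_def using simple_graph_edge[of G x y] by simp

lemma nbhd_sym: "simple_graph G \<Longrightarrow> y \<in> nbhd G x \<Longrightarrow> x \<in> nbhd G y"
  by (simp add: nbhd_iff insert_commute)

lemma nbhd_irrefl: "simple_graph G \<Longrightarrow> x \<notin> nbhd G x"
  using nbhd_vertices[of G x x] by blast

lemma finite_nbhd: "simple_graph G \<Longrightarrow> finite (nbhd G x)"
  unfolding nbhd_def simple_graph_def by simp

lemma simple_graph_complement: "simple_graph G \<Longrightarrow> simple_graph (complement G)"
  unfolding simple_graph_def complement_def by auto

lemma nbhd_complement:
  "x \<in> fst G \<Longrightarrow> y \<in> nbhd (complement G) x \<longleftrightarrow> y \<in> fst G \<and> y \<noteq> x \<and> y \<notin> nbhd G x"
  unfolding nbhd_def complement_def by (auto simp: doubleton_eq_iff)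

lemma contains_extend_hub_leaves:
  assumes H: "fst H = C \<union> K" "C \<inter> K = {}" "finite K" "h \<in> C"
    and H_edges: "\<forall>e\<in>snd H. (\<exists>k\<in>K. e = {h, k}) \<or> e \<in> X"
    and g: "inj_on g C" "g ` C \<subseteq> fst G" "\<forall>e\<in>X. e \<subseteq> C \<and> g ` e \<in> snd G"
    and S: "S \<subseteq> nbhd G (g h)" "S \<inter> g ` C = {}" "finite S" "card K \<le> card S"
  shows "contains G H"
proof -
  obtain \<phi> where \<phi>: "inj_on \<phi> K" "\<phi> ` K \<subseteq> S"
    using card_le_inj[OF H(3) S(3,4)] by blast
  define f where "f x = (if x \<in> K then \<phi> x else g x)" for x
  have "inj_on f (K \<union> C)"
    unfolding f_def by (rule inj_on_disjoint_Un[OF \<phi>(1) g(1)]) (use \<phi>(2) S(2) in blast)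
  moreover have "f ` fst H \<subseteq> fst G"
    using H(1) g(2) \<phi>(2) S(1) unfolding f_def nbhd_def by auto
  moreover have "f ` e \<in> snd G" if e: "e \<in> snd H" for e
  proof -
    consider k where "k \<in> K" "e = {h, k}" | "e \<in> X" using H_edges e by blast
    then show ?thesis
    proof cases
      case 1
      then have "f ` e = {g h, \<phi> k}" using H(2,4) unfolding f_def by auto
      then show ?thesis using 1 \<phi>(2) S(1) unfolding nbhd_def by auto
    next
      case 2
      then have "\<forall>x\<in>e. f x = g x" using g(3) H(2) unfolding f_def by auto
      then have "f ` e = g ` e" by (simp cong: image_cong)
      then show ?thesis using 2 g(3) by simp
    qed
  qed
  ultimately show ?thesis
    unfolding contains_def using H(1) by (intro exI[of _ f]) (simp add: Un_commute)
qed

lemma contains_T1: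
  assumes G: "simple_graph G" and m: "2 \<le> m"
    and nbrs: "a \<in> nbhd G c" "b \<in> nbhd G c" "a' \<in> nbhd G a" "b' \<in> nbhd G b"
    and dist: "distinct [c, a, b, a', b']"
    and leaves: "m - 2 \<le> card (nbhd G c - {a, b, a', b'})"
  shows "contains G (T1 (m + 3))"
proof -
  let ?C = "{0, m - 1, m, m + 1, m + 2}" and ?S = "nbhd G c - {a, b, a', b'}"
  define g where "g k = (if k = 0 then c else if k = m - 1 then a else if k = m then b
     else if k = m + 1 then a' else b')" for k
  have gv: "g 0 = c" "g (m - 1) = a" "g m = b" "g (m + 1) = a'" "g (m + 2) = b'"
    using m by (auto simp: g_def)
  have img: "g ` ?C = {c, a, b, a', b'}" using gv by simp
  have E: "{c, a} \<in> snd G" "{c, b} \<in> snd G" "{a, a'} \<in> snd G" "{b, b'} \<in> snd G"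
    using nbrs by (simp_all add: nbhd_iff[OF G])
  have "c \<in> fst G" using nbhd_vertices[OF G nbrs(1)] by simp
  then have V: "{c, a, b, a', b'} \<subseteq> fst G" using nbrs unfolding nbhd_def by simp
  show ?thesis
  proof (rule contains_extend_hub_leaves[where C = ?C and K = "{1..m - 2}" and h = 0 and g = g
        and S = ?S and X = "{{0, m - 1}, {0, m}, {m - 1, m + 1}, {m, m + 2}}"])
    show "fst (T1 (m + 3)) = ?C \<union> {1..m - 2}" using m by (auto simp: T1_def)
    show "?C \<inter> {1..m - 2} = {}" using m by auto
    show "\<forall>e\<in>snd (T1 (m + 3)). (\<exists>k\<in>{1..m - 2}. e = {0, k}) \<or>
        e \<in> {{0, m - 1}, {0, m}, {m - 1, m + 1}, {m, m + 2}}"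
    proof
      fix e assume "e \<in> snd (T1 (m + 3))"
      then consider k where "e = {0, k}" "1 \<le> k" "k \<le> m" | "e = {m - 1, m + 1}" | "e = {m, m + 2}"
        unfolding T1_def by fastforce
      then show "(\<exists>k\<in>{1..m - 2}. e = {0, k}) \<or> e \<in> {{0, m - 1}, {0, m}, {m - 1, m + 1}, {m, m + 2}}"
      proof cases
        case 1
        then have "k \<in> {1..m - 2} \<or> k = m - 1 \<or> k = m" by auto
        then show ?thesis using 1 by blast
      qed simp_all
    qed
    have "distinct (map g [0, m - 1, m, m + 1, m + 2])" using gv dist by simp
    then show "inj_on g ?C" by (simp only: distinct_map list.set)
    show "g ` ?C \<subseteq> fst G"
      unfolding img by (rule V)
    show "\<forall>e\<in>{{0, m - 1}, {0, m}, {m - 1, m + 1}, {m, m + 2}}. e \<subseteq> ?C \<and> g ` e \<in> snd G"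
      using gv E by simp
    show "?S \<subseteq> nbhd G (g 0)" unfolding gv by blast
    show "?S \<inter> g ` ?C = {}" unfolding img using nbhd_irrefl[OF G, of c] by blast
    show "finite ?S" using finite_nbhd[OF G, of c] by simp
    show "card {1..m - 2} \<le> card ?S" using leaves by simp
  qed simp_all
qed

lemma contains_T2:
  assumes G: "simple_graph G" and m: "1 \<le> m"
    and nbrs: "a \<in> nbhd G c" "a' \<in> nbhd G a" "a'' \<in> nbhd G a"
    and dist: "distinct [c, a, a', a'']"
    and leaves: "m - 1 \<le> card (nbhd G c - {a, a', a''})"
  shows "contains G (T2 (m + 3))"
proof -
  let ?C = "{0, m, m + 1, m + 2}" and ?S = "nbhd G c - {a, a', a''}"
    and ?X = "{{0, m}, {m, m + 1}, {m, m + 2}}"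
  define g where "g k = (if k = 0 then c else if k = m then a else if k = m + 1 then a' else a'')" for k
  have gv: "g 0 = c" "g m = a" "g (m + 1) = a'" "g (m + 2) = a''"
    using m by (auto simp: g_def)
  have img: "g ` ?C = {c, a, a', a''}" using gv by simp
  have E: "{c, a} \<in> snd G" "{a, a'} \<in> snd G" "{a, a''} \<in> snd G"
    using nbrs by (simp_all add: nbhd_iff[OF G])
  have "c \<in> fst G" using nbhd_vertices[OF G nbrs(1)] by simp
  then have V: "{c, a, a', a''} \<subseteq> fst G" using nbrs unfolding nbhd_def by simp
  show ?thesis
  proof (rule contains_extend_hub_leaves[where C = ?C and K = "{1..m - 1}" and h = 0 and g = g
        and S = ?S and X = ?X])
    show "fst (T2 (m + 3)) = ?C \<union> {1..m - 1}" using m by (auto simp: T2_def)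
    show "?C \<inter> {1..m - 1} = {}" using m by auto
    show "\<forall>e\<in>snd (T2 (m + 3)). (\<exists>k\<in>{1..m - 1}. e = {0, k}) \<or> e \<in> ?X"
    proof
      fix e assume "e \<in> snd (T2 (m + 3))"
      then consider k where "e = {0, k}" "1 \<le> k" "k \<le> m" | "e = {m, m + 1}" | "e = {m, m + 2}"
        unfolding T2_def by fastforce
      then show "(\<exists>k\<in>{1..m - 1}. e = {0, k}) \<or> e \<in> ?X"
      proof cases
        case 1
        then have "k \<in> {1..m - 1} \<or> k = m" by auto
        then show ?thesis using 1 by blast
      qed simp_all
    qed
    have "distinct (map g [0, m, m + 1, m + 2])" using gv dist by simp
    then show "inj_on g ?C" by (simp only: distinct_map list.set)
    show "g ` ?C \<subseteq> fst G" unfolding img by (rule V)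
    show "\<forall>e\<in>?X. e \<subseteq> ?C \<and> g ` e \<in> snd G" using gv E by simp
    show "?S \<subseteq> nbhd G (g 0)" unfolding gv by blast
    show "?S \<inter> g ` ?C = {}" unfolding img using nbhd_irrefl[OF G, of c] by blast
    show "finite ?S" using finite_nbhd[OF G, of c] by simp
    show "card {1..m - 1} \<le> card ?S" using leaves by simp
  qed simp_all
qed

lemma contains_Tprime:
  assumes G: "simple_graph G"
    and nbrs: "a \<in> nbhd G c" "a' \<in> nbhd G a"
    and dist: "distinct [c, a, a']"
    and leaves: "m \<le> card (nbhd G c - {a, a'})"
  shows "contains G (Tprime (m + 3))"
proof -
  let ?C = "{0, m + 1, m + 2}" and ?S = "nbhd G c - {a, a'}" and ?X = "{{0, m + 1}, {m + 1, m + 2}}"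
  define g where "g k = (if k = 0 then c else if k = m + 1 then a else a')" for k
  have gv: "g 0 = c" "g (m + 1) = a" "g (m + 2) = a'" by (auto simp: g_def)
  have img: "g ` ?C = {c, a, a'}" using gv by simp
  have E: "{c, a} \<in> snd G" "{a, a'} \<in> snd G"
    using nbrs by (simp_all add: nbhd_iff[OF G])
  have "c \<in> fst G" using nbhd_vertices[OF G nbrs(1)] by simp
  then have V: "{c, a, a'} \<subseteq> fst G" using nbrs unfolding nbhd_def by simp
  show ?thesis
  proof (rule contains_extend_hub_leaves[where C = ?C and K = "{1..m}" and h = 0 and g = g
        and S = ?S and X = ?X])
    show "fst (Tprime (m + 3)) = ?C \<union> {1..m}" by (auto simp: Tprime_def)
    show "\<forall>e\<in>snd (Tprime (m + 3)). (\<exists>k\<in>{1..m}. e = {0, k}) \<or> e \<in> ?X"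
    proof
      fix e assume "e \<in> snd (Tprime (m + 3))"
      then consider k where "e = {0, k}" "1 \<le> k" "k \<le> m + 1" | "e = {m + 1, m + 2}"
        unfolding Tprime_def by fastforce
      then show "(\<exists>k\<in>{1..m}. e = {0, k}) \<or> e \<in> ?X"
      proof cases
        case 1
        then have "k \<in> {1..m} \<or> k = m + 1" by auto
        then show ?thesis using 1 by blast
      qed simp
    qed
    have "distinct (map g [0, m + 1, m + 2])" using gv dist by simp
    then show "inj_on g ?C" by (simp only: distinct_map list.set)
    show "g ` ?C \<subseteq> fst G" unfolding img by (rule V)
    show "\<forall>e\<in>?X. e \<subseteq> ?C \<and> g ` e \<in> snd G" using gv E by simp
    show "?S \<subseteq> nbhd G (g 0)" unfolding gv by blast
    show "?S \<inter> g ` ?C = {}" unfolding img using nbhd_irrefl[OF G, of c] by blast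
    show "finite ?S" using finite_nbhd[OF G, of c] by simp
    show "card {1..m} \<le> card ?S" using leaves by simp
  qed auto
qed

lemma contains_Tstar:
  assumes G: "simple_graph G" and m: "1 \<le> m"
    and nbrs: "a \<in> nbhd G c" "a' \<in> nbhd G a" "a'' \<in> nbhd G a'"
    and dist: "distinct [c, a, a', a'']"
    and leaves: "m - 1 \<le> card (nbhd G c - {a, a', a''})"
  shows "contains G (Tstar (m + 3))"
proof -
  let ?C = "{0, m, m + 1, m + 2}" and ?S = "nbhd G c - {a, a', a''}"
    and ?X = "{{0, m}, {m, m + 1}, {m + 1, m + 2}}"
  define g where "g k = (if k = 0 then c else if k = m then a else if k = m + 1 then a' else a'')" for k
  have gv: "g 0 = c" "g m = a" "g (m + 1) = a'" "g (m + 2) = a''"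
    using m by (auto simp: g_def)
  have img: "g ` ?C = {c, a, a', a''}" using gv by simp
  have E: "{c, a} \<in> snd G" "{a, a'} \<in> snd G" "{a', a''} \<in> snd G"
    using nbrs by (simp_all add: nbhd_iff[OF G])
  have "c \<in> fst G" using nbhd_vertices[OF G nbrs(1)] by simp
  then have V: "{c, a, a', a''} \<subseteq> fst G" using nbrs unfolding nbhd_def by simp
  show ?thesis
  proof (rule contains_extend_hub_leaves[where C = ?C and K = "{1..m - 1}" and h = 0 and g = g
        and S = ?S and X = ?X])
    show "fst (Tstar (m + 3)) = ?C \<union> {1..m - 1}" using m by (auto simp: Tstar_def)
    show "?C \<inter> {1..m - 1} = {}" using m by auto
    show "\<forall>e\<in>snd (Tstar (m + 3)). (\<exists>k\<in>{1..m - 1}. e = {0, k}) \<or> e \<in> ?X"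
    proof
      fix e assume "e \<in> snd (Tstar (m + 3))"
      then consider k where "e = {0, k}" "1 \<le> k" "k \<le> m" | "e = {m, m + 1}" | "e = {m + 1, m + 2}"
        unfolding Tstar_def by fastforce
      then show "(\<exists>k\<in>{1..m - 1}. e = {0, k}) \<or> e \<in> ?X"
      proof cases
        case 1
        then have "k \<in> {1..m - 1} \<or> k = m" by auto
        then show ?thesis using 1 by blast
      qed simp_all
    qed
    have "distinct (map g [0, m, m + 1, m + 2])" using gv dist by simp
    then show "inj_on g ?C" by (simp only: distinct_map list.set)
    show "g ` ?C \<subseteq> fst G" unfolding img by (rule V)
    show "\<forall>e\<in>?X. e \<subseteq> ?C \<and> g ` e \<in> snd G" using gv E by simp
    show "?S \<subseteq> nbhd G (g 0)" unfolding gv by blast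
    show "?S \<inter> g ` ?C = {}" unfolding img using nbhd_irrefl[OF G, of c] by blast
    show "finite ?S" using finite_nbhd[OF G, of c] by simp
    show "card {1..m - 1} \<le> card ?S" using leaves by simp
  qed simp_all
qed

locale host_graph =
  fixes V :: "'a set" and E :: "'a set set" and m :: nat
  assumes simple: "simple_graph (V, E)"
    and card_V: "card V = 2 * m + 1"
    and m_ge_5: "5 \<le> m"
begin

abbreviation N :: "'a \<Rightarrow> 'a set" where "N \<equiv> nbhd (V, E)"

abbreviation Nc :: "'a \<Rightarrow> 'a set" where "Nc \<equiv> nbhd (complement (V, E))"

abbreviation contains_T1_T2 :: bool where
  "contains_T1_T2 \<equiv> contains (V, E) (T1 (m + 3)) \<and> contains (V, E) (T2 (m + 3))"

lemma simple_complement: "simple_graph (complement (V, E))"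
  using simple by (rule simple_graph_complement)

lemma finite_V: "finite V"
  using simple unfolding simple_graph_def by simp

lemma N_vertices: "y \<in> N x \<Longrightarrow> x \<in> V \<and> y \<in> V \<and> x \<noteq> y"
  using nbhd_vertices[OF simple, of y x] by simp

lemma Nc_vertices: "y \<in> Nc x \<Longrightarrow> x \<in> V \<and> y \<in> V \<and> x \<noteq> y"
  using nbhd_vertices[OF simple_complement, of y x] by (simp add: complement_def)

lemma N_sym: "y \<in> N x \<Longrightarrow> x \<in> N y"
  by (rule nbhd_sym[OF simple])

lemma Nc_sym: "y \<in> Nc x \<Longrightarrow> x \<in> Nc y"
  by (rule nbhd_sym[OF simple_complement])

lemma Nc_iff: "x \<in> V \<Longrightarrow> y \<in> Nc x \<longleftrightarrow> y \<in> V \<and> y \<noteq> x \<and> y \<notin> N x"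
  using nbhd_complement[of x "(V, E)"] by simp

lemma finite_N: "finite (N x)"
  by (rule finite_nbhd[OF simple])

lemma finite_Nc: "finite (Nc x)"
  by (rule finite_nbhd[OF simple_complement])

text \<open>Each other vertex is a neighbour of x either in the graph or in its complement.\<close>
lemma degree_sum: assumes "x \<in> V" shows "card (N x) + card (Nc x) = 2 * m"
proof -
  have "N x \<union> Nc x = V - {x}" "N x \<inter> Nc x = {}"
    using Nc_iff[OF assms] N_vertices by auto
  then have "card (N x) + card (Nc x) = card (V - {x})"
    using card_Un_disjoint[OF finite_N[of x] finite_Nc[of x]] by simp
  then show ?thesis using card_V finite_V assms by simp
qed

lemma card_N_ge: assumes "X - set xs \<subseteq> N x" shows "card X - length xs \<le> card (N x)"
  using card_Diff_list[of X xs] card_mono[OF finite_N assms] by linarith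

lemma N_irrefl: "x \<notin> N x"
  using N_vertices[of x x] by blast

lemma Nc_irrefl: "x \<notin> Nc x"
  using Nc_vertices[of x x] by blast

lemma Nc_not_N: "y \<in> Nc x \<Longrightarrow> y \<notin> N x"
  using Nc_iff[of x y] Nc_vertices[of y x] by blast

lemma not_N_imp_Nc: "x \<in> V \<Longrightarrow> y \<in> V \<Longrightarrow> y \<noteq> x \<Longrightarrow> y \<notin> N x \<Longrightarrow> y \<in> Nc x"
  using Nc_iff[of x y] by blast

lemma min_degree_vertex:
  obtains v where "v \<in> V" "\<forall>y\<in>V. card (N v) \<le> card (N y)"
proof -
  obtain x where "x \<in> V" using card_V by fastforce
  then show ?thesis
    using ex_has_least_nat[of "\<lambda>x. x \<in> V" x "\<lambda>x. card (N x)"] that by blast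
qed

text \<open>The neighbours of a non-neighbour r of c lie in N c or among the other non-neighbours of c,
  so r has a neighbour in N c as soon as its degree reaches the number of non-neighbours of c.\<close>
lemma N_of_non_neighbour:
  assumes r: "r \<in> Nc c"
  shows "N r \<subseteq> N c \<union> (Nc c - {r})"
proof
  fix y assume y: "y \<in> N r"
  have "y \<noteq> c" using y N_sym Nc_not_N[OF r] by blast
  moreover have "c \<in> V" "y \<in> V" "y \<noteq> r" using Nc_vertices[OF r] N_vertices[OF y] by auto
  ultimately show "y \<in> N c \<union> (Nc c - {r})" using not_N_imp_Nc[of c y] by blast
qed

lemma common_neighbour:
  assumes r: "r \<in> Nc c" and deg: "card (Nc c) \<le> card (N r)"
  obtains a where "a \<in> N r" "a \<in> N c"
proof -
  have "0 < card (Nc c)" using r finite_Nc[of c] card_gt_0_iff by blast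
  then have "card (Nc c - {r}) < card (N r)" using r deg finite_Nc[of c] by simp
  then obtain a where "a \<in> N r" "a \<notin> Nc c - {r}"
    using exists_not_in[of "Nc c - {r}"] finite_Nc[of c] by blast
  then show ?thesis using that N_of_non_neighbour[OF r] by blast
qed

lemma high_degree_T1_T2:
  assumes ab: "a \<in> N c" "b \<in> N c" "a \<noteq> b"
    and deg: "m + 2 \<le> card (N c)" "4 \<le> card (N a)" "4 \<le> card (N b)"
  shows contains_T1_T2
proof
  obtain a' where a': "a' \<in> N a" "a' \<notin> {c, b}"
    using exists_not_in_list[of "[c, b]" "N a"] deg(2) by auto
  obtain b' where b': "b' \<in> N b" "b' \<notin> {c, a, a'}"
    using exists_not_in_list[of "[c, a, a']" "N b"] deg(3) by auto
  have "m - 2 \<le> card (N c - {a, b, a', b'})"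
    using card_Diff_list[of "N c" "[a, b, a', b']"] deg(1) by simp
  moreover have "distinct [c, a, b, a', b']" using ab a' b' N_irrefl by auto
  ultimately show "contains (V, E) (T1 (m + 3))"
    using contains_T1[OF simple _ ab(1,2) a'(1) b'(1)] m_ge_5 by simp
next
  obtain a' where a': "a' \<in> N a" "a' \<noteq> c"
    using exists_not_in_list[of "[c]" "N a"] deg(2) by auto
  obtain a'' where a'': "a'' \<in> N a" "a'' \<notin> {c, a'}"
    using exists_not_in_list[of "[c, a']" "N a"] deg(2) by auto
  have "m - 1 \<le> card (N c - {a, a', a''})"
    using card_Diff_list[of "N c" "[a, a', a'']"] deg(1) by simp
  moreover have "distinct [c, a, a', a'']" using ab a' a'' N_irrefl by auto
  ultimately show "contains (V, E) (T2 (m + 3))"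
    using contains_T2[OF simple _ ab(1) a'(1) a''(1)] m_ge_5 by simp
qed

text \<open>Minimum degree m and a vertex c of degree m + 1: a non-neighbour r of c has a neighbour a
  in N c, and r serves as the pendant vertex at a.\<close>
lemma degree_m_plus_1_T1_T2:
  assumes min: "\<forall>x\<in>V. m \<le> card (N x)" and c: "c \<in> V" "card (N c) = m + 1"
  shows contains_T1_T2
proof -
  have Nc_c: "card (Nc c) = m - 1" using degree_sum[OF c(1)] c(2) by simp
  then obtain r where r: "r \<in> Nc c" using exists_not_in_list[of "[]" "Nc c"] m_ge_5 by auto
  have r_facts: "r \<in> V" "r \<notin> N c" "r \<noteq> c" using r Nc_vertices Nc_not_N by auto
  obtain a where a: "a \<in> N r" "a \<in> N c"
    using common_neighbour[OF r] Nc_c min r_facts(1) by force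
  have ra: "r \<in> N a" using a(1) N_sym by blast
  show ?thesis
  proof
    obtain b where b: "b \<in> N c" "b \<noteq> a"
      using exists_not_in_list[of "[a]" "N c"] c(2) m_ge_5 by auto
    have "m \<le> card (N b)" using min b(1) N_vertices by blast
    then obtain b' where b': "b' \<in> N b" "b' \<notin> {c, a, r}"
      using exists_not_in_list[of "[c, a, r]" "N b"] m_ge_5 by auto
    have "N c - {a, b, r, b'} = N c - {a, b, b'}" using r_facts by auto
    then have "m - 2 \<le> card (N c - {a, b, r, b'})"
      using card_Diff_list[of "N c" "[a, b, b']"] c(2) by simp
    moreover have "distinct [c, a, b, r, b']" using a b b' r_facts N_irrefl by auto
    ultimately show "contains (V, E) (T1 (m + 3))"
      using contains_T1[OF simple _ a(2) b(1) ra b'(1)] m_ge_5 by simp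
  next
    have "m \<le> card (N a)" using min a(2) N_vertices by blast
    then obtain a'' where a'': "a'' \<in> N a" "a'' \<notin> {c, r}"
      using exists_not_in_list[of "[c, r]" "N a"] m_ge_5 by auto
    have "N c - {a, r, a''} = N c - {a, a''}" using r_facts by auto
    then have "m - 1 \<le> card (N c - {a, r, a''})"
      using card_Diff_list[of "N c" "[a, a'']"] c(2) by simp
    moreover have "distinct [c, a, r, a'']" using a a'' r_facts N_irrefl by auto
    ultimately show "contains (V, E) (T2 (m + 3))"
      using contains_T2[OF simple _ a(2) ra a''(1)] m_ge_5 by simp
  qed
qed

text \<open>In an m-regular host two non-neighbours r1, r2 of c attach to different neighbours a, b of c,
  giving T1 with hub c.\<close>
lemma regular_T1:
  assumes reg: "\<forall>x\<in>V. card (N x) = m" and c: "c \<in> V"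
  shows "contains (V, E) (T1 (m + 3))"
proof -
  have Nc_c: "card (Nc c) = m" using degree_sum[OF c] reg c by simp
  then obtain r1 where r1: "r1 \<in> Nc c" using exists_not_in_list[of "[]" "Nc c"] m_ge_5 by auto
  obtain a where a: "a \<in> N r1" "a \<in> N c"
    using common_neighbour[OF r1] Nc_c reg Nc_vertices[OF r1] by force
  have "card (N a - {c}) < card (Nc c)"
    using Nc_c reg N_vertices[OF a(2)] N_sym[OF a(2)] m_ge_5 by simp
  then obtain r2 where r2: "r2 \<in> Nc c" "r2 \<notin> N a - {c}"
    using exists_not_in[of "N a - {c}" "Nc c"] finite_N by blast
  obtain b where b: "b \<in> N r2" "b \<in> N c"
    using common_neighbour[OF r2(1)] Nc_c reg Nc_vertices[OF r2(1)] by force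
  have r_facts: "r1 \<notin> N c" "r2 \<notin> N c" "r1 \<noteq> c" "r2 \<noteq> c" "r2 \<notin> N a"
    using r1 r2 Nc_not_N Nc_vertices by auto
  have "N c - {a, b, r1, r2} = N c - {a, b}" using r_facts by auto
  then have "m - 2 \<le> card (N c - {a, b, r1, r2})"
    using card_Diff_list[of "N c" "[a, b]"] reg c by simp
  moreover have "distinct [c, a, b, r1, r2]"
    using a b r_facts N_sym N_irrefl by auto
  ultimately show ?thesis
    using contains_T1[OF simple _ a(2) b(2) N_sym[OF a(1)] N_sym[OF b(1)]] m_ge_5 by simp
qed

text \<open>In an m-regular host where no vertex of N c has two neighbours outside N c,
  some non-neighbour of c has at most m - 2 neighbours in N c: two non-neighbours with
  m - 1 neighbours each in the m-set N c would share one.\<close>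
lemma regular_sparse_non_neighbour:
  assumes reg: "\<forall>x\<in>V. card (N x) = m" and c: "c \<in> V"
    and sparse: "\<forall>a\<in>N c. \<forall>r1\<in>Nc c. \<forall>r2\<in>Nc c. r1 \<in> N a \<longrightarrow> r2 \<in> N a \<longrightarrow> r1 = r2"
  obtains r where "r \<in> Nc c" "card (N r \<inter> N c) \<le> m - 2"
proof (rule ccontr)
  assume "\<not> thesis"
  then have dense: "\<forall>r\<in>Nc c. m - 1 \<le> card (N r \<inter> N c)" using that by force
  have Nc_c: "card (Nc c) = m" using degree_sum[OF c] reg c by simp
  obtain r1 where r1: "r1 \<in> Nc c" using exists_not_in_list[of "[]" "Nc c"] Nc_c m_ge_5 by auto
  obtain r2 where r2: "r2 \<in> Nc c" "r2 \<noteq> r1"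
    using exists_not_in_list[of "[r1]" "Nc c"] Nc_c m_ge_5 by auto
  let ?A1 = "N r1 \<inter> N c" and ?A2 = "N r2 \<inter> N c"
  have "card (?A1 \<union> ?A2) \<le> m" using card_mono[OF finite_N[of c], of "?A1 \<union> ?A2"] reg c by auto
  moreover have "card ?A1 + card ?A2 = card (?A1 \<union> ?A2) + card (?A1 \<inter> ?A2)"
    by (rule card_Un_Int) (simp_all add: finite_N)
  moreover have "m - 1 \<le> card ?A1" "m - 1 \<le> card ?A2" using dense r1 r2(1) by auto
  ultimately have "0 < card (?A1 \<inter> ?A2)" using m_ge_5 by linarith
  then obtain a where "a \<in> ?A1 \<inter> ?A2" by (metis card.empty ex_in_conv less_irrefl)
  then have "a \<in> N c" "r1 \<in> N a" "r2 \<in> N a" using N_sym by auto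
  then show False using sparse r1 r2 by blast
qed

text \<open>In an m-regular host either a neighbour of c has two neighbours outside N c (hub c), or a
  sparse non-neighbour r of c has two neighbours outside N c and serves as the branching vertex
  of a T2 whose hub is a common neighbour a of r and c.\<close>
lemma regular_T2:
  assumes reg: "\<forall>x\<in>V. card (N x) = m" and c: "c \<in> V"
  shows "contains (V, E) (T2 (m + 3))"
proof (cases "\<forall>a\<in>N c. \<forall>r1\<in>Nc c. \<forall>r2\<in>Nc c. r1 \<in> N a \<longrightarrow> r2 \<in> N a \<longrightarrow> r1 = r2")
  case False
  then obtain a r1 r2 where ar: "a \<in> N c" "r1 \<in> Nc c" "r2 \<in> Nc c" "r1 \<noteq> r2" "r1 \<in> N a" "r2 \<in> N a"
    by blast
  have "N c - {a, r1, r2} = N c - {a}" using ar(2,3) Nc_not_N by auto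
  then have "m - 1 \<le> card (N c - {a, r1, r2})"
    using card_Diff_list[of "N c" "[a]"] reg c by simp
  moreover have "distinct [c, a, r1, r2]" using ar Nc_vertices Nc_not_N N_irrefl by auto
  ultimately show ?thesis using contains_T2[OF simple _ ar(1,5,6)] m_ge_5 by simp
next
  case sparse: True
  obtain r where r: "r \<in> Nc c" "card (N r \<inter> N c) \<le> m - 2"
    using regular_sparse_non_neighbour[OF reg c sparse] by blast
  have Nc_c: "card (Nc c) = m" using degree_sum[OF c] reg c by simp
  obtain a where a: "a \<in> N r" "a \<in> N c"
    using common_neighbour[OF r(1)] Nc_c reg Nc_vertices[OF r(1)] by force
  have "N r = (N r \<inter> N c) \<union> (N r \<inter> Nc c)" using N_of_non_neighbour[OF r(1)] by blast
  then have "card (N r) \<le> card (N r \<inter> N c) + card (N r \<inter> Nc c)"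
    using card_Un_le[of "N r \<inter> N c" "N r \<inter> Nc c"] by simp
  moreover have "card (N r) = m" using reg Nc_vertices[OF r(1)] by simp
  ultimately have two: "2 \<le> card (N r \<inter> Nc c)" using r(2) m_ge_5 by linarith
  obtain r' where r': "r' \<in> N r" "r' \<in> Nc c"
    using exists_not_in_list[of "[]" "N r \<inter> Nc c"] two by auto
  obtain r'' where r'': "r'' \<in> N r" "r'' \<in> Nc c" "r'' \<noteq> r'"
    using exists_not_in_list[of "[r']" "N r \<inter> Nc c"] two by auto
  have ra: "r \<in> N a" using N_sym[OF a(1)] .
  have outside: "x \<notin> N a" if "x \<in> N r" "x \<in> Nc c" for x
  proof
    assume "x \<in> N a"
    then have "r = x" using sparse a(2) r(1) \<open>x \<in> Nc c\<close> ra by blast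
    then show False using \<open>x \<in> N r\<close> N_irrefl by blast
  qed
  have "N a - {r, r', r''} = N a - {r}" using outside r' r'' by auto
  then have "m - 1 \<le> card (N a - {r, r', r''})"
    using card_Diff_list[of "N a" "[r]"] reg N_vertices[OF a(2)] by simp
  moreover have "distinct [a, r, r', r'']" using a r' r'' N_irrefl Nc_not_N by auto
  ultimately show ?thesis
    using contains_T2[OF simple _ ra r'(1) r''(1)] m_ge_5 by simp
qed

lemma min_degree_T1_T2:
  assumes min: "\<forall>x\<in>V. m \<le> card (N x)"
  shows contains_T1_T2
proof (cases "\<exists>c\<in>V. m + 2 \<le> card (N c)")
  case True
  then obtain c where c: "c \<in> V" "m + 2 \<le> card (N c)" by blast
  obtain a where a: "a \<in> N c" using exists_not_in_list[of "[]" "N c"] c(2) by auto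
  obtain b where b: "b \<in> N c" "b \<noteq> a" using exists_not_in_list[of "[a]" "N c"] c(2) by auto
  have "m \<le> card (N a)" "m \<le> card (N b)" using min a b(1) N_vertices by blast+
  then show ?thesis using high_degree_T1_T2[OF a b(1) b(2)[symmetric] c(2)] m_ge_5 by simp
next
  case False
  show ?thesis
  proof (cases "\<exists>c\<in>V. card (N c) = m + 1")
    case True
    then show ?thesis using degree_m_plus_1_T1_T2[OF min] by blast
  next
    case False
    then have "\<forall>x\<in>V. card (N x) = m" using min \<open>\<not> (\<exists>c\<in>V. m + 2 \<le> card (N c))\<close> by force
    moreover obtain c where "c \<in> V" using card_V by fastforce
    ultimately show ?thesis using regular_T1 regular_T2 by blast
  qed
qed

lemma Tprime_in_complement:
  assumes "u \<in> Nc v" "w \<in> Nc u" "w \<noteq> v" "m \<le> card (Nc v - {u, w})"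
  shows "contains (complement (V, E)) (Tprime (m + 3))"
  using contains_Tprime[OF simple_complement assms(1,2) _ assms(4)]
    Nc_vertices[OF assms(1)] Nc_vertices[OF assms(2)] assms(3) by auto

lemma Tstar_in_complement:
  assumes "u \<in> Nc v" "w \<in> Nc u" "x \<in> Nc w" "w \<noteq> v" "x \<noteq> u" "x \<noteq> v"
    and "m - 1 \<le> card (Nc v - {u, w, x})"
  shows "contains (complement (V, E)) (Tstar (m + 3))"
  using contains_Tstar[OF simple_complement _ assms(1,2,3) _ assms(7)] m_ge_5
    Nc_vertices[OF assms(1)] Nc_vertices[OF assms(2)] Nc_vertices[OF assms(3)] assms(4-6) by auto

text \<open>Minimum degree m - 1: every non-neighbour of v is adjacent to every neighbour w of v,
  otherwise T' appears in the complement; then w has degree at least m + 2.\<close>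
lemma no_Tprime_degree_m_minus_1:
  assumes noT: "\<not> contains (complement (V, E)) (Tprime (m + 3))"
    and v: "v \<in> V" "\<forall>y\<in>V. card (N v) \<le> card (N y)" "card (N v) = m - 1"
  shows contains_T1_T2
proof -
  have Nc_v: "card (Nc v) = m + 1" using degree_sum[OF v(1)] v(3) m_ge_5 by simp
  have cross: "w \<in> N u" if u: "u \<in> Nc v" and w: "w \<in> N v" for u w
  proof (rule ccontr)
    assume "w \<notin> N u"
    moreover have "u \<in> V" "w \<in> V" "w \<noteq> u" using Nc_vertices[OF u] N_vertices[OF w] Nc_not_N[OF u] w by auto
    ultimately have wu: "w \<in> Nc u" using not_N_imp_Nc by blast
    have "Nc v - {u, w} = Nc v - {u}" using w Nc_not_N[of w v] by auto
    then have "m \<le> card (Nc v - {u, w})" using Nc_v u finite_Nc[of v] by simp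
    then show False using Tprime_in_complement[OF u wu] N_vertices[OF w] noT by blast
  qed
  obtain w where w: "w \<in> N v" using exists_not_in_list[of "[]" "N v"] v(3) m_ge_5 by auto
  have "insert v (Nc v) \<subseteq> N w" using cross w N_sym by blast
  moreover have "card (insert v (Nc v)) = m + 2" using Nc_v finite_Nc[of v] Nc_irrefl[of v] by simp
  ultimately have deg_w: "m + 2 \<le> card (N w)" using card_mono[OF finite_N] by metis
  obtain a where a: "a \<in> Nc v" using exists_not_in_list[of "[]" "Nc v"] Nc_v by auto
  obtain b where b: "b \<in> Nc v" "b \<noteq> a" using exists_not_in_list[of "[a]" "Nc v"] Nc_v m_ge_5 by auto
  have "4 \<le> card (N a)" "4 \<le> card (N b)"
    using v(2,3) Nc_vertices[OF a] Nc_vertices[OF b(1)] m_ge_5 by fastforce+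
  then show ?thesis
    using high_degree_T1_T2[OF N_sym[OF cross[OF a w]] N_sym[OF cross[OF b(1) w]] b(2)[symmetric] deg_w] by blast
qed

text \<open>Minimum degree at most m - 2: every non-neighbour u of v is adjacent to all of V - {u, v},
  otherwise T' appears in the complement.\<close>
lemma no_Tprime_small_degree:
  assumes noT: "\<not> contains (complement (V, E)) (Tprime (m + 3))"
    and v: "v \<in> V" "card (N v) \<le> m - 2"
  shows contains_T1_T2
proof -
  have Nc_v: "m + 2 \<le> card (Nc v)" using degree_sum[OF v(1)] v(2) m_ge_5 by linarith
  have dominating: "V - {u, v} \<subseteq> N u" if u: "u \<in> Nc v" for u
  proof
    fix y assume y: "y \<in> V - {u, v}"
    show "y \<in> N u"
    proof (rule ccontr)
      assume "y \<notin> N u"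
      then have yu: "y \<in> Nc u" using not_N_imp_Nc Nc_vertices[OF u] y by blast
      have "m \<le> card (Nc v - {u, y})"
        using card_Diff_list[of "Nc v" "[u, y]"] Nc_v by simp
      then show False using Tprime_in_complement[OF u yu] y noT by blast
    qed
  qed
  have deg: "2 * m - 1 \<le> card (N u)" if u: "u \<in> Nc v" for u
    using card_N_ge[of V "[u, v]" u] dominating[OF u] card_V by simp
  obtain c where c: "c \<in> Nc v" using exists_not_in_list[of "[]" "Nc v"] Nc_v by auto
  obtain a where a: "a \<in> Nc v" "a \<noteq> c" using exists_not_in_list[of "[c]" "Nc v"] Nc_v by auto
  obtain b where b: "b \<in> Nc v" "b \<notin> {c, a}" using exists_not_in_list[of "[c, a]" "Nc v"] Nc_v m_ge_5 by auto
  have "a \<in> N c" "b \<in> N c"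
    using dominating[OF c] a b Nc_vertices[OF a(1)] Nc_vertices[OF b(1)] by auto
  then show ?thesis
    using high_degree_T1_T2[of a c b] deg[OF c] deg[OF a(1)] deg[OF b(1)] b(2) m_ge_5 by auto
qed

lemma no_Tprime_in_complement_T1_T2:
  assumes noT: "\<not> contains (complement (V, E)) (Tprime (m + 3))"
  shows contains_T1_T2
proof -
  obtain v where v: "v \<in> V" "\<forall>y\<in>V. card (N v) \<le> card (N y)" by (rule min_degree_vertex)
  consider "m \<le> card (N v)" | "card (N v) = m - 1" | "card (N v) \<le> m - 2" by linarith
  then show ?thesis
  proof cases
    case 1
    then show ?thesis using min_degree_T1_T2 v(2) le_trans by blast
  next
    case 2
    then show ?thesis using no_Tprime_degree_m_minus_1[OF noT v] by blast
  next
    case 3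
    then show ?thesis using no_Tprime_small_degree[OF noT v(1)] by blast
  qed
qed

text \<open>Minimum degree m - 1: a neighbour w of v has degree at least m + 2, since a non-neighbour u
  of both would force all non-neighbours of w into {u, v}.\<close>
lemma no_Tstar_degree_m_minus_1:
  assumes noT: "\<not> contains (complement (V, E)) (Tstar (m + 3))"
    and v: "v \<in> V" "\<forall>y\<in>V. card (N v) \<le> card (N y)" "card (N v) = m - 1"
  shows contains_T1_T2
proof -
  have Nc_v: "card (Nc v) = m + 1" using degree_sum[OF v(1)] v(3) m_ge_5 by simp
  have blocked: "Nc w \<subseteq> {u, v}" if u: "u \<in> Nc v" and w: "w \<in> N v" "w \<in> Nc u" for u w
  proof
    fix x assume x: "x \<in> Nc w"
    show "x \<in> {u, v}"
    proof (rule ccontr)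
      assume "x \<notin> {u, v}"
      moreover have "Nc v - {u, w, x} = Nc v - {u, x}" using w(1) Nc_not_N[of w v] by auto
      then have "m - 1 \<le> card (Nc v - {u, w, x})"
        using card_Diff_list[of "Nc v" "[u, x]"] Nc_v by simp
      ultimately show False
        using Tstar_in_complement[OF u w(2) x] N_vertices[OF w(1)] noT by auto
    qed
  qed
  obtain w where w: "w \<in> N v" using exists_not_in_list[of "[]" "N v"] v(3) m_ge_5 by auto
  have deg_w: "m + 2 \<le> card (N w)"
  proof (cases "Nc v \<subseteq> N w")
    case True
    then have "insert v (Nc v) \<subseteq> N w" using w N_sym by blast
    moreover have "card (insert v (Nc v)) = m + 2" using Nc_v finite_Nc[of v] Nc_irrefl[of v] by simp
    ultimately show ?thesis using card_mono[OF finite_N] by metis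
  next
    case False
    then obtain u where u: "u \<in> Nc v" "u \<notin> N w" by blast
    have "w \<in> Nc u"
      using not_N_imp_Nc[of u w] Nc_vertices[OF u(1)] N_vertices[OF w] u w N_sym Nc_not_N by blast
    then have "Nc w \<subseteq> {u}" using blocked[OF u(1) w] w N_sym Nc_not_N by blast
    then have "card (Nc w) \<le> 1" using card_mono[of "{u}" "Nc w"] by simp
    then show ?thesis using degree_sum[of w] N_vertices[OF w] m_ge_5 by simp
  qed
  obtain a where a: "a \<in> N w" using exists_not_in_list[of "[]" "N w"] deg_w by auto
  obtain b where b: "b \<in> N w" "b \<noteq> a" using exists_not_in_list[of "[a]" "N w"] deg_w by auto
  have "4 \<le> card (N a)" "4 \<le> card (N b)"
    using v(2,3) N_vertices[OF a] N_vertices[OF b(1)] m_ge_5 by fastforce+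
  then show ?thesis using high_degree_T1_T2[OF a b(1) b(2)[symmetric] deg_w] by blast
qed

lemma no_Tstar_almost_dominated:
  assumes noT: "\<not> contains (complement (V, E)) (Tstar (m + 3))"
    and D: "m + 2 \<le> card (Nc v)" and x: "x \<in> V" "x \<noteq> v"
  obtains u where "Nc v - {x, u} \<subseteq> N x"
proof -
  have blocked: "Nc w \<subseteq> {u, v}" if u: "u \<in> Nc v" and w: "w \<in> Nc u" "w \<noteq> v" for u w
  proof
    fix y assume y: "y \<in> Nc w"
    show "y \<in> {u, v}"
    proof (rule ccontr)
      assume "y \<notin> {u, v}"
      moreover have "m - 1 \<le> card (Nc v - {u, w, y})"
        using card_Diff_list[of "Nc v" "[u, w, y]"] D by simp
      ultimately show False using Tstar_in_complement[OF u w(1) y w(2)] noT by auto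
    qed
  qed
  show ?thesis
  proof (cases "\<exists>u\<in>Nc v. u \<in> Nc x")
    case True
    then obtain u where u: "u \<in> Nc v" "u \<in> Nc x" by blast
    have "Nc x \<subseteq> {u, v}" using blocked[OF u(1) Nc_sym[OF u(2)] x(2)] .
    then have "Nc v - {x, u} \<subseteq> N x" using x not_N_imp_Nc Nc_vertices Nc_irrefl by blast
    then show ?thesis using that by blast
  next
    case False
    then have "Nc v - {x, x} \<subseteq> N x" using x not_N_imp_Nc Nc_vertices by blast
    then show ?thesis using that by blast
  qed
qed

text \<open>Minimum degree at most m - 2: the previous lemma produces a vertex of degree at least m + 2
  whose neighbours among the non-neighbours of v have large degree.\<close>
lemma no_Tstar_small_degree:
  assumes noT: "\<not> contains (complement (V, E)) (Tstar (m + 3))"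
    and v: "v \<in> V" "card (N v) \<le> m - 2"
  shows contains_T1_T2
proof -
  define D where "D = card (Nc v)"
  have D: "m + 2 \<le> D" using degree_sum[OF v(1)] v(2) m_ge_5 unfolding D_def by linarith
  have covered: "\<exists>u. Nc v - {x, u} \<subseteq> N x" if "x \<in> V" "x \<noteq> v" for x
    using no_Tstar_almost_dominated[OF noT _ that] D unfolding D_def by blast
  have deg: "D - 2 \<le> card (N x)" if x: "x \<in> V" "x \<noteq> v" for x
  proof -
    obtain u where "Nc v - {x, u} \<subseteq> N x" using covered[OF x] by blast
    then show ?thesis using card_N_ge[of "Nc v" "[x, u]" x] unfolding D_def by simp
  qed
  show ?thesis
  proof (cases "N v = {}")
    case True
    then have "D = 2 * m" using degree_sum[OF v(1)] unfolding D_def by simp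
    obtain c where c: "c \<in> Nc v" using exists_not_in_list[of "[]" "Nc v"] D unfolding D_def by auto
    have deg_c: "m + 2 \<le> card (N c)" using deg Nc_vertices[OF c] \<open>D = 2 * m\<close> m_ge_5 by fastforce
    obtain a where a: "a \<in> N c" using exists_not_in_list[of "[]" "N c"] deg_c by auto
    obtain b where b: "b \<in> N c" "b \<noteq> a" using exists_not_in_list[of "[a]" "N c"] deg_c by auto
    have "a \<noteq> v" "b \<noteq> v" using a b(1) True N_sym by blast+
    then have "4 \<le> card (N a)" "4 \<le> card (N b)"
      using deg N_vertices[OF a] N_vertices[OF b(1)] \<open>D = 2 * m\<close> m_ge_5 by fastforce+
    then show ?thesis using high_degree_T1_T2[OF a b(1) b(2)[symmetric] deg_c] by blast
  next
    case False
    then obtain w where w: "w \<in> N v" by blast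
    obtain u where u: "Nc v - {w, u} \<subseteq> N w" using covered N_vertices[OF w] by blast
    have "insert v (Nc v - {u}) \<subseteq> N w" using u w N_sym Nc_not_N by blast
    moreover have "D - 1 \<le> card (Nc v - {u})"
      using card_Diff_list[of "Nc v" "[u]"] unfolding D_def by simp
    then have "D \<le> card (insert v (Nc v - {u}))" using finite_Nc[of v] Nc_irrefl[of v] by simp
    ultimately have deg_w: "m + 2 \<le> card (N w)" using card_mono[OF finite_N] D by (meson le_trans)
    obtain a where a: "a \<in> Nc v" "a \<noteq> u" using exists_not_in_list[of "[u]" "Nc v"] D unfolding D_def by auto
    obtain b where b: "b \<in> Nc v" "b \<notin> {u, a}"
      using exists_not_in_list[of "[u, a]" "Nc v"] D m_ge_5 unfolding D_def by auto
    have "a \<in> N w" "b \<in> N w" using \<open>insert v (Nc v - {u}) \<subseteq> N w\<close> a b by auto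
    moreover have "4 \<le> card (N a)" "4 \<le> card (N b)"
      using deg Nc_vertices[OF a(1)] Nc_vertices[OF b(1)] D m_ge_5 by fastforce+
    moreover have "a \<noteq> b" using b(2) by auto
    ultimately show ?thesis using high_degree_T1_T2[of a w b] deg_w by blast
  qed
qed

lemma no_Tstar_in_complement_T1_T2:
  assumes noT: "\<not> contains (complement (V, E)) (Tstar (m + 3))"
  shows contains_T1_T2
proof -
  obtain v where v: "v \<in> V" "\<forall>y\<in>V. card (N v) \<le> card (N y)" by (rule min_degree_vertex)
  consider "m \<le> card (N v)" | "card (N v) = m - 1" | "card (N v) \<le> m - 2" by linarith
  then show ?thesis
  proof cases
    case 1
    then show ?thesis using min_degree_T1_T2 v(2) le_trans by blast
  next
    case 2
    then show ?thesis using no_Tstar_degree_m_minus_1[OF noT v] by blast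
  next
    case 3
    then show ?thesis using no_Tstar_small_degree[OF noT v(1)] by blast
  qed
qed

end

definition two_cliques :: "nat \<Rightarrow> nat \<Rightarrow> nat set set" where
  "two_cliques m N = {{x, y} | x y. x < N \<and> y < N \<and> x \<noteq> y \<and> (x < m \<longleftrightarrow> y < m)}"

lemma simple_two_cliques: "simple_graph ({0..<N}, two_cliques m N)"
  unfolding simple_graph_def two_cliques_def by fastforce

lemma two_cliques_edge: "{x, y} \<in> two_cliques m N \<Longrightarrow> (x < m \<longleftrightarrow> y < m)"
  unfolding two_cliques_def by (auto simp: doubleton_eq_iff)

lemma two_cliques_complement_edge:
  "{x, y} \<in> snd (complement ({0..<N}, two_cliques m N)) \<Longrightarrow> (x < m \<longleftrightarrow> \<not> y < m)"
  unfolding complement_def two_cliques_def by (auto simp: doubleton_eq_iff)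

lemma one_side_bound:
  assumes N: "N \<le> 2 * m" and f: "inj_on f K" "f ` K \<subseteq> {0..<N}"
    and side: "\<forall>k\<in>K. (f k < m \<longleftrightarrow> s)"
  shows "card K \<le> m"
proof -
  let ?Side = "{x \<in> {0..<N}. x < m \<longleftrightarrow> s}"
  have "card ?Side \<le> m"
  proof (cases s)
    case True
    then have "?Side \<subseteq> {0..<m}" by auto
    then show ?thesis using card_mono[of "{0..<m}" ?Side] by simp
  next
    case False
    then have "?Side \<subseteq> {m..<N}" by auto
    then show ?thesis using card_mono[of "{m..<N}" ?Side] N by simp
  qed
  moreover have "f ` K \<subseteq> ?Side" using f(2) side by auto
  ultimately have "card (f ` K) \<le> m" using card_mono[of ?Side "f ` K"] by simp
  then show ?thesis using card_image[OF f(1)] by simp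
qed

lemma containsE:
  assumes "contains G H"
  obtains f where "inj_on f (fst H)" "f ` fst H \<subseteq> fst G" "\<And>x y. {x, y} \<in> snd H \<Longrightarrow> {f x, f y} \<in> snd G"
proof -
  obtain f where f: "inj_on f (fst H)" "f ` fst H \<subseteq> fst G" "\<forall>e\<in>snd H. f ` e \<in> snd G"
    using assms unfolding contains_def by blast
  show ?thesis
  proof (rule that[OF f(1,2)])
    fix x y assume "{x, y} \<in> snd H"
    then show "{f x, f y} \<in> snd G" using f(3) by fastforce
  qed
qed

text \<open>A vertex with m neighbours cannot be mapped into a clique of size at most m: this excludes
  T1 and T2, whose hub 0 has the m neighbours 1, ..., m.\<close>
lemma two_cliques_no_hub:
  assumes N: "N \<le> 2 * m" and H: "{0..m} \<subseteq> fst H" "\<forall>k\<in>{1..m}. {0, k} \<in> snd H"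
  shows "\<not> contains ({0..<N}, two_cliques m N) H"
proof
  assume "contains ({0..<N}, two_cliques m N) H"
  then obtain f where f: "inj_on f (fst H)" "f ` fst H \<subseteq> {0..<N}"
    and edge: "\<And>x y. {x, y} \<in> snd H \<Longrightarrow> {f x, f y} \<in> two_cliques m N"
    by (rule containsE) simp
  have "(f k < m \<longleftrightarrow> f 0 < m)" if k: "k \<in> {0..m}" for k
  proof (cases "k = 0")
    case False
    then have "{0, k} \<in> snd H" using H(2) k by simp
    then show ?thesis using edge two_cliques_edge by blast
  qed simp
  then have side: "\<forall>k\<in>{0..m}. (f k < m \<longleftrightarrow> f 0 < m)" by blast
  have img: "f ` {0..m} \<subseteq> {0..<N}" using f(2) H(1) by (meson image_mono order_trans)
  have "card {0..m} \<le> m" by (rule one_side_bound[OF N inj_on_subset[OF f(1) H(1)] img side])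
  then show False by simp
qed

text \<open>The complement is complete bipartite between the two sides, so T' and T* would need
  m + 1 vertices on one side: the m + 1 leaves of T', resp. the leaves 1..m and the end m+2 of
  the path of T*.\<close>
lemma two_cliques_complement_no_Tprime:
  assumes N: "N \<le> 2 * m"
  shows "\<not> contains (complement ({0..<N}, two_cliques m N)) (Tprime (m + 3))"
proof
  assume "contains (complement ({0..<N}, two_cliques m N)) (Tprime (m + 3))"
  then obtain f where f: "inj_on f {0..<m + 3}" "f ` {0..<m + 3} \<subseteq> {0..<N}"
    and edge: "\<And>x y. {x, y} \<in> snd (Tprime (m + 3)) \<Longrightarrow>
      {f x, f y} \<in> snd (complement ({0..<N}, two_cliques m N))"
    by (rule containsE) (simp_all add: Tprime_def complement_def)
  have "(f k < m \<longleftrightarrow> \<not> f 0 < m)" if k: "k \<in> {1..m + 1}" for k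
  proof -
    have "{0, k} \<in> snd (Tprime (m + 3))" using k unfolding Tprime_def by auto
    then show ?thesis using edge two_cliques_complement_edge by blast
  qed
  then have side: "\<forall>k\<in>{1..m + 1}. (f k < m \<longleftrightarrow> \<not> f 0 < m)" by blast
  have K: "{1..m + 1} \<subseteq> {0..<m + 3}" by auto
  then have img: "f ` {1..m + 1} \<subseteq> {0..<N}" using f(2) by (meson image_mono order_trans)
  have "card {1..m + 1} \<le> m" by (rule one_side_bound[OF N inj_on_subset[OF f(1) K] img side])
  then show False by simp
qed

lemma two_cliques_complement_no_Tstar:
  assumes N: "N \<le> 2 * m" and m: "1 \<le> m"
  shows "\<not> contains (complement ({0..<N}, two_cliques m N)) (Tstar (m + 3))"
proof
  assume "contains (complement ({0..<N}, two_cliques m N)) (Tstar (m + 3))"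
  then obtain f where f: "inj_on f {0..<m + 3}" "f ` {0..<m + 3} \<subseteq> {0..<N}"
    and edge: "\<And>x y. {x, y} \<in> snd (Tstar (m + 3)) \<Longrightarrow>
      {f x, f y} \<in> snd (complement ({0..<N}, two_cliques m N))"
    by (rule containsE) (simp_all add: Tstar_def complement_def)
  have leaves: "(f k < m \<longleftrightarrow> \<not> f 0 < m)" if k: "k \<in> {1..m}" for k
  proof -
    have "{0, k} \<in> snd (Tstar (m + 3))" using k unfolding Tstar_def by auto
    then show ?thesis using edge two_cliques_complement_edge by blast
  qed
  have "{m, m + 1} \<in> snd (Tstar (m + 3))" "{m + 1, m + 2} \<in> snd (Tstar (m + 3))"
    unfolding Tstar_def by simp_all
  then have "(f (m + 2) < m \<longleftrightarrow> f m < m)"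
    using edge two_cliques_complement_edge by blast
  then have side: "\<forall>k\<in>insert (m + 2) {1..m}. (f k < m \<longleftrightarrow> \<not> f 0 < m)"
    using leaves m by auto
  have K: "insert (m + 2) {1..m} \<subseteq> {0..<m + 3}" by auto
  then have img: "f ` insert (m + 2) {1..m} \<subseteq> {0..<N}" using f(2) by (meson image_mono order_trans)
  have "card (insert (m + 2) {1..m}) \<le> m"
    by (rule one_side_bound[OF N inj_on_subset[OF f(1) K] img side])
  then show False by simp
qed

lemma ramsey_eqI:
  fixes G1 :: "'a graph" and G2 :: "'b graph"
  assumes pos: "0 < R"
    and upper: "\<And>E. simple_graph ({0..<R}, E) \<Longrightarrow>
      contains ({0..<R}, E) G1 \<or> contains (complement ({0..<R}, E)) G2"
    and lower: "\<And>N. N < R \<Longrightarrow> \<exists>E. simple_graph ({0..<N}, E) \<and>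
      \<not> contains ({0..<N}, E) G1 \<and> \<not> contains (complement ({0..<N}, E)) G2"
  shows "ramsey G1 G2 = R"
  unfolding ramsey_def
proof (rule Least_equality)
  show "0 < R \<and> (\<forall>E. simple_graph ({0..<R}, E) \<longrightarrow>
      contains ({0..<R}, E) G1 \<or> contains (complement ({0..<R}, E)) G2)"
    using pos upper by blast
next
  fix N assume "0 < N \<and> (\<forall>E. simple_graph ({0..<N}, E) \<longrightarrow>
      contains ({0..<N::nat}, E) G1 \<or> contains (complement ({0..<N}, E)) G2)"
  then show "R \<le> N" using lower not_le by metis
qed

lemma ramsey_T1_T2_vs_Tprime_Tstar:
  assumes m: "5 \<le> m" and T: "T \<in> {T1 (m + 3), T2 (m + 3)}" and S: "S \<in> {Tprime (m + 3), Tstar (m + 3)}"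
  shows "ramsey T S = 2 * m + 1"
proof (rule ramsey_eqI)
  fix E assume simple: "simple_graph ({0..<2 * m + 1}, E)"
  interpret host_graph "{0..<2 * m + 1}" E m
    using simple m by unfold_locales simp_all
  show "contains ({0..<2 * m + 1}, E) T \<or> contains (complement ({0..<2 * m + 1}, E)) S"
    using no_Tprime_in_complement_T1_T2 no_Tstar_in_complement_T1_T2 T S by blast
next
  fix N assume "N < 2 * m + 1"
  then have N: "N \<le> 2 * m" by simp
  have "{0..m} \<subseteq> fst T" "\<forall>k\<in>{1..m}. {0, k} \<in> snd T"
    using T by (auto simp: T1_def T2_def)
  then have "\<not> contains ({0..<N}, two_cliques m N) T" by (rule two_cliques_no_hub[OF N])
  moreover have "\<not> contains (complement ({0..<N}, two_cliques m N)) S"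
    using two_cliques_complement_no_Tprime[OF N] two_cliques_complement_no_Tstar[OF N] S m by auto
  ultimately show "\<exists>E. simple_graph ({0..<N}, E) \<and> \<not> contains ({0..<N}, E) T \<and>
      \<not> contains (complement ({0..<N}, E)) S"
    using simple_two_cliques by blast
qed simp

theorem theorem4p2:
  fixes n i :: nat
  assumes "n \<ge> 8" and "i \<in> {1, 2}"
  shows "ramsey (Ti i n) (Tprime n) = 2 * n - 5 \<and> ramsey (Ti i n) (Tstar n) = 2 * n - 5"
proof -
  define m where "m = n - 3"
  have n: "n = m + 3" and m: "5 \<le> m" and R: "2 * n - 5 = 2 * m + 1"
    using assms(1) unfolding m_def by auto
  have "Ti i n \<in> {T1 (m + 3), T2 (m + 3)}" unfolding Ti_def n by simp
  then show ?thesis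
    unfolding R n using ramsey_T1_T2_vs_Tprime_Tstar[OF m] by simp
qed

end
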